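(* Let $M_\infty:=\frac{U}{1-\alpha}+\frac{\alpha}{1-\alpha}\frac{B}{\xi}+K_1$, where $\alpha=1-e^{-\lambda\xi T}$ and $U,B>0$ are constants such that for every measurable $f:\mathbb{R}\times[0,T]\to[0,\infty)$ with $|f(z,t)-f(\tilde z,t)|\le|z-\tilde z|$ for all $z,\tilde z,t$, one has $\sup_{t\in[0,T]}Jf(0,t)\le U+\alpha\big(\sup_{t\in[0,T]}f(0,t)+B/\xi\big)$. Then for every $n\ge 0$, $$v_n(z,t)\le M_\infty+|z|=:L(z),\qquad (z,t)\in\mathbb{R}\times[0,T].$$
   Context: Fix constants $r>0$, $\sigma>0$, $\lambda>0$, $T>0$, $K_1\ge 0$ and $\zeta\in\{-1,1\}$. Let $\nu$ be a probability measure on $(0,\infty)$ with $\xi:=\int_{(0,\infty)}y\,\nu(dy)<\infty$, and set $\mu:=\lambda(\xi-1)$. For $t\in[0,T]$ let $q_t:=\frac{1}{rT}(1-e^{-r(T-t)})$. On a probability space with probability measure $\mathbb{Q}$ carrying a standard Brownian motion $W$, for $t\in[0,T]$ and $z\in\mathbb{R}$ let $Z^{t,z}=(Z^{t,z}_s)_{0\le s\le T-t}$ be the solution of $dZ^{t,z}_s=-\mu(q_{t+s}-Z^{t,z}_s)\,ds+\sigma(q_{t+s}-Z^{t,z}_s)\,dW_s$, $Z^{t,z}_0=z$. For measurable $f:\mathbb{R}\times[0,T]\to[0,\infty)$ define $$Pf(z,t):=\int_{(0,\infty)} f\Big(\frac{z}{y}+q_t\frac{y-1}{y},t\Big)\,y\,\nu(dy),$$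 $$Jf(z,t):=\mathbb{E}^{\mathbb{Q}}\Big\{e^{-\lambda\xi(T-t)}\big(\zeta(Z^{t,z}_{T-t}-K_1)\big)^++\int_0^{T-t}e^{-\lambda\xi s}\lambda\, Pf(Z^{t,z}_s,t+s)\,ds\Big\}.$$ Define $v_0(z,t):=(\zeta(z-K_1))^+$ and $v_{n+1}:=Jv_n$ for $n\ge0$. (Such constants $U,B$ exist; the paper establishes this.) *)

theory Defs
  imports "HOL-Probability.Probability"
begin

definition standard_BM :: "'a measure \<Rightarrow> (real \<Rightarrow> 'a \<Rightarrow> real) \<Rightarrow> bool" where
  "standard_BM M W \<longleftrightarrow>
     prob_space M \<and>
     (\<forall>t. W t \<in> borel_measurable M) \<and>
     (\<forall>\<omega>\<in>space M. W 0 \<omega> = 0 \<and> continuous_on {0..} (\<lambda>t. W t \<omega>)) \<and>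
     (\<forall>s t. 0 \<le> s \<and> s < t \<longrightarrow>
        distributed M lborel (\<lambda>\<omega>. W t \<omega> - W s \<omega>)
          (\<lambda>x. ennreal (normal_density 0 (sqrt (t - s)) x))) \<and>
     (\<forall>(ts::nat \<Rightarrow> real) n. 0 \<le> ts 0 \<and> (\<forall>i<n. ts i < ts (Suc i)) \<longrightarrow>
        prob_space.indep_vars M (\<lambda>_. borel) (\<lambda>i \<omega>. W (ts (Suc i)) \<omega> - W (ts i) \<omega>) {..<n})"

definition xi :: "real measure \<Rightarrow> real" where
  "xi nu = (\<integral>y. y \<partial>nu)"

definition mu :: "real \<Rightarrow> real measure \<Rightarrow> real" where
  "mu lam nu = lam * (xi nu - 1)"

definition qf :: "real \<Rightarrow> real \<Rightarrow> real \<Rightarrow> real" where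
  "qf r T t = (1 - exp (- r * (T - t))) / (r * T)"

definition alpha :: "real \<Rightarrow> real measure \<Rightarrow> real \<Rightarrow> real" where
  "alpha lam nu T = 1 - exp (- lam * xi nu * T)"

text \<open>The (unique strong) solution Z^{t,z}_s of
  dZ_s = -mu (q_{t+s} - Z_s) ds + sg (q_{t+s} - Z_s) dW_s,  Z_0 = z,
  written pathwise via the variation-of-constants formula:
  with Phi_s = exp((mu - sg^2/2) s - sg W_s) and q'(u) = - exp(-r(T-u))/T,
  Z_s = q_{t+s} - Phi_s (q_t - z + int_0^s Phi_u^{-1} q'(t+u) du).\<close>
definition Zsol :: "real \<Rightarrow> real \<Rightarrow> real \<Rightarrow> real \<Rightarrow> (real \<Rightarrow> 'a \<Rightarrow> real)
                    \<Rightarrow> real \<Rightarrow> real \<Rightarrow> real \<Rightarrow> 'a \<Rightarrow> real" where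
  "Zsol r T m sg W t z s \<omega> =
     (let Phi = (\<lambda>u. exp ((m - sg\<^sup>2 / 2) * u - sg * W u \<omega>))
      in qf r T (t + s)
         - Phi s * (qf r T t - z
                    + integral {0..s} (\<lambda>u. (- exp (- r * (T - (t + u))) / T) / Phi u)))"

definition Pop :: "real measure \<Rightarrow> real \<Rightarrow> real \<Rightarrow> (real \<Rightarrow> real \<Rightarrow> real) \<Rightarrow> real \<Rightarrow> real \<Rightarrow> ennreal" where
  "Pop nu r T f z t = (\<integral>\<^sup>+ y. ennreal (f (z / y + qf r T t * (y - 1) / y) t * y) \<partial>nu)"

definition Jop :: "'a measure \<Rightarrow> (real \<Rightarrow> 'a \<Rightarrow> real) \<Rightarrow> real measure \<Rightarrow> real \<Rightarrow> real \<Rightarrow> real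
                   \<Rightarrow> real \<Rightarrow> real \<Rightarrow> real \<Rightarrow> (real \<Rightarrow> real \<Rightarrow> real) \<Rightarrow> real \<Rightarrow> real \<Rightarrow> real" where
  "Jop M W nu r sg lam T K1 zeta f z t =
     enn2real (\<integral>\<^sup>+ \<omega>.
        ennreal (exp (- lam * xi nu * (T - t))
                 * max 0 (zeta * (Zsol r T (mu lam nu) sg W t z (T - t) \<omega> - K1)))
        + (\<integral>\<^sup>+ s\<in>{0..T - t}. ennreal (exp (- lam * xi nu * s) * lam)
              * Pop nu r T f (Zsol r T (mu lam nu) sg W t z s \<omega>) (t + s) \<partial>lborel)
      \<partial>M)"

definition vseq :: "'a measure \<Rightarrow> (real \<Rightarrow> 'a \<Rightarrow> real) \<Rightarrow> real measure \<Rightarrow> real \<Rightarrow> real \<Rightarrow> real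
                   \<Rightarrow> real \<Rightarrow> real \<Rightarrow> real \<Rightarrow> nat \<Rightarrow> real \<Rightarrow> real \<Rightarrow> real" where
  "vseq M W nu r sg lam T K1 zeta n =
     (Jop M W nu r sg lam T K1 zeta ^^ n) (\<lambda>z t. max 0 (zeta * (z - K1)))"

end

theory Submission
  imports Defs
begin

text \<open>Put \<open>L(z) = c + |z|\<close> with \<open>c = M\<^sub>\<infinity>\<close>. The hypothesis, applied to the 1-Lipschitz function
  \<open>L\<close>, gives \<open>J L(0,t) \<le> U + \<alpha> (c + B/\<xi>) \<le> c\<close>; the last inequality is how \<open>M\<^sub>\<infinity>\<close> is chosen.
  The solution is affine in its initial value, \<open>Z(t,z) = Z(t,0) + \<Phi> z\<close> with \<open>E \<Phi>(s) = exp(\<mu> s)\<close>,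
  and \<open>P\<close> maps 1-Lipschitz functions to 1-Lipschitz functions; since the discounted expected weights
  of the terminal and running terms of \<open>J\<close> add up to one, \<open>J L(z,t) \<le> J L(0,t) + |z| \<le> L(z)\<close>.
  As \<open>J\<close> is monotone and \<open>v\<^sub>0 \<le> K\<^sub>1 + |z| \<le> L\<close>, induction gives \<open>v\<^sub>n \<le> L\<close>.\<close>

lemma nn_integral_add_le:
  assumes g: "g \<in> borel_measurable M"
  shows "(\<integral>\<^sup>+x. f x + g x \<partial>M) \<le> (\<integral>\<^sup>+x. f x \<partial>M) + (\<integral>\<^sup>+x. g x \<partial>M)"
proof -
  have "integral\<^sup>S M h \<le> (\<integral>\<^sup>+x. f x \<partial>M) + (\<integral>\<^sup>+x. g x \<partial>M)"
    if h: "simple_function M h" "h \<le> (\<lambda>x. f x + g x)" "\<forall>x. h x < top" for h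
  proof -
    have hm: "h \<in> borel_measurable M" using h(1) by (rule borel_measurable_simple_function)
    have "integral\<^sup>S M h = (\<integral>\<^sup>+x. h x \<partial>M)" using h(1) by (simp add: nn_integral_eq_simple_integral)
    also have "\<dots> \<le> (\<integral>\<^sup>+x. (h x - g x) + g x \<partial>M)"
      by (intro nn_integral_mono) (metis add.commute ennreal_minus_le_iff le_cases le_iff_add order_refl)
    also have "\<dots> = (\<integral>\<^sup>+x. (h x - g x) \<partial>M) + (\<integral>\<^sup>+x. g x \<partial>M)"
      using hm g by (intro nn_integral_add) auto
    also have "(\<integral>\<^sup>+x. (h x - g x) \<partial>M) \<le> (\<integral>\<^sup>+x. f x \<partial>M)"
    proof (intro nn_integral_mono)
      fix x
      have "h x \<le> f x + g x" using h(2) by (auto simp: le_fun_def)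
      then show "h x - g x \<le> f x"
        using h(3)[rule_format, of x] by (auto simp: ennreal_minus_le_iff add.commute)
    qed
    finally show ?thesis by (simp add: add_right_mono)
  qed
  then show ?thesis unfolding nn_integral_def_finite[of M "\<lambda>x. f x + g x"]
    by (intro SUP_least) auto
qed

lemma normal_density_mult_exp:
  assumes "\<sigma> > 0"
  shows "normal_density 0 \<sigma> x * exp (c * x) = exp (c\<^sup>2 * \<sigma>\<^sup>2 / 2) * normal_density (c * \<sigma>\<^sup>2) \<sigma> x"
proof -
  have "- (x - 0)\<^sup>2 / (2 * \<sigma>\<^sup>2) + c * x = c\<^sup>2 * \<sigma>\<^sup>2 / 2 + - (x - c * \<sigma>\<^sup>2)\<^sup>2 / (2 * \<sigma>\<^sup>2)"
    using assms by (simp add: field_simps power2_eq_square)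
  then have "exp (- (x - 0)\<^sup>2 / (2 * \<sigma>\<^sup>2)) * exp (c * x)
      = exp (c\<^sup>2 * \<sigma>\<^sup>2 / 2) * exp (- (x - c * \<sigma>\<^sup>2)\<^sup>2 / (2 * \<sigma>\<^sup>2))"
    by (metis exp_add)
  then show ?thesis unfolding normal_density_def by (simp add: algebra_simps)
qed

lemma nn_integral_normal_density:
  assumes "\<sigma> > 0"
  shows "(\<integral>\<^sup>+x. ennreal (normal_density \<mu> \<sigma> x) \<partial>lborel) = 1"
proof -
  interpret prob_space "density lborel (normal_density \<mu> \<sigma>)"
    using prob_space_normal_density assms by blast
  have "emeasure (density lborel (normal_density \<mu> \<sigma>)) UNIV = 1" using emeasure_space_1 by simp
  then show ?thesis by (simp add: emeasure_density)
qed

lemma distributed_normal_nn_integral_exp: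
  assumes D: "distributed M lborel X (\<lambda>x. ennreal (normal_density 0 \<sigma> x))" and \<sigma>: "\<sigma> > 0"
  shows "(\<integral>\<^sup>+\<omega>. ennreal (exp (c * X \<omega>)) \<partial>M) = ennreal (exp (c\<^sup>2 * \<sigma>\<^sup>2 / 2))"
proof -
  have "(\<integral>\<^sup>+\<omega>. ennreal (exp (c * X \<omega>)) \<partial>M)
      = (\<integral>\<^sup>+x. ennreal (normal_density 0 \<sigma> x) * ennreal (exp (c * x)) \<partial>lborel)"
    by (rule distributed_nn_integral[OF D, symmetric]) simp
  also have "\<dots> = (\<integral>\<^sup>+x. ennreal (exp (c\<^sup>2 * \<sigma>\<^sup>2 / 2)) * ennreal (normal_density (c * \<sigma>\<^sup>2) \<sigma> x) \<partial>lborel)"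
    by (intro nn_integral_cong)
      (simp add: normal_density_mult_exp[OF \<sigma>] normal_density_nonneg flip: ennreal_mult)
  also have "\<dots> = ennreal (exp (c\<^sup>2 * \<sigma>\<^sup>2 / 2))"
    by (simp add: nn_integral_cmult nn_integral_normal_density[OF \<sigma>])
  finally show ?thesis .
qed

lemma pred_in_atLeastAtMost[measurable (raw)]:
  fixes f g h :: "'a \<Rightarrow> real"
  assumes [measurable]: "f \<in> borel_measurable N" "g \<in> borel_measurable N" "h \<in> borel_measurable N"
  shows "Measurable.pred N (\<lambda>x. f x \<in> {g x..h x})"
  unfolding atLeastAtMost_iff by measurable

lemma nn_integral_exp_decay:
  assumes "0 \<le> \<tau>" "0 \<le> lam"
  shows "(\<integral>\<^sup>+s\<in>{0..\<tau>}. ennreal (lam * exp (- lam * s)) \<partial>lborel) = ennreal (1 - exp (- lam * \<tau>))"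
proof -
  have "((\<lambda>s. lam * exp (- lam * s)) has_integral ((- exp (- lam * \<tau>)) - (- exp (- lam * 0)))) {0..\<tau>}"
  proof (rule fundamental_theorem_of_calculus[OF assms(1)])
    fix x :: real
    show "((\<lambda>s. - exp (- lam * s)) has_vector_derivative lam * exp (- lam * x)) (at x within {0..\<tau>})"
      unfolding has_real_derivative_iff_has_vector_derivative[symmetric]
      by (auto intro!: derivative_eq_intros)
  qed
  then have "((\<lambda>s. lam * exp (- lam * s)) has_integral (1 - exp (- lam * \<tau>))) {0..\<tau>}" by simp
  from nn_integral_has_integral_lebesgue[OF _ this] assms(2)
  show ?thesis by (simp add: indicator_mult_ennreal mult.commute)
qed

lemma LIMSEQ_ceiling_mult_divide: "(\<lambda>n. of_int \<lceil>real (Suc n) * x\<rceil> / real (Suc n)) \<longlonglongrightarrow> (x::real)"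
proof (rule tendsto_sandwich[of "\<lambda>n. x" _ _ "\<lambda>n. x + inverse (real (Suc n))"])
  have "x \<le> of_int \<lceil>real (Suc n) * x\<rceil> / real (Suc n)"
    and "of_int \<lceil>real (Suc n) * x\<rceil> / real (Suc n) \<le> x + inverse (real (Suc n))" for n
  proof -
    have "real (Suc n) * x \<le> of_int \<lceil>real (Suc n) * x\<rceil>" "of_int \<lceil>real (Suc n) * x\<rceil> \<le> real (Suc n) * x + 1"
      by linarith+
    then show "x \<le> of_int \<lceil>real (Suc n) * x\<rceil> / real (Suc n)"
      and "of_int \<lceil>real (Suc n) * x\<rceil> / real (Suc n) \<le> x + inverse (real (Suc n))"
      by (simp_all add: field_simps del: of_nat_Suc)
  qed
  then show "\<forall>\<^sub>F n in sequentially. x \<le> of_int \<lceil>real (Suc n) * x\<rceil> / real (Suc n)"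
    and "\<forall>\<^sub>F n in sequentially. of_int \<lceil>real (Suc n) * x\<rceil> / real (Suc n) \<le> x + inverse (real (Suc n))"
    by simp_all
  show "(\<lambda>n. x + inverse (real (Suc n))) \<longlonglongrightarrow> x"
    using tendsto_add[OF tendsto_const LIMSEQ_inverse_real_of_nat, of x] by simp
qed simp

text \<open>The process is the pointwise limit of its samples on the grids \<open>\<int>/(n+1)\<close>.\<close>

lemma borel_measurable_continuous_process:
  fixes X :: "real \<Rightarrow> 'a \<Rightarrow> real"
  assumes meas: "\<And>t. X t \<in> borel_measurable M"
    and cont: "\<And>\<omega>. \<omega> \<in> space M \<Longrightarrow> continuous_on {0..} (\<lambda>t. X t \<omega>)"
  shows "(\<lambda>p. X (max 0 (fst p)) (snd p)) \<in> borel_measurable ((lborel::real measure) \<Otimes>\<^sub>M M)"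
proof (rule borel_measurable_LIMSEQ_metric)
  fix n :: nat
  have "(\<lambda>p. X (of_int i / real (Suc n)) (snd p)) \<in> borel_measurable ((lborel::real measure) \<Otimes>\<^sub>M M)"
    for i :: int
    by (rule measurable_compose[OF measurable_snd meas])
  moreover have "(\<lambda>p. \<lceil>real (Suc n) * max 0 (fst p)\<rceil>) \<in> measurable ((lborel::real measure) \<Otimes>\<^sub>M M) (count_space UNIV)"
    by measurable
  ultimately show "(\<lambda>p. X (of_int \<lceil>real (Suc n) * max 0 (fst p)\<rceil> / real (Suc n)) (snd p))
      \<in> borel_measurable ((lborel::real measure) \<Otimes>\<^sub>M M)"
    by (rule measurable_compose_countable)
next
  fix p :: "real \<times> 'a" assume "p \<in> space (lborel \<Otimes>\<^sub>M M)"
  then have "snd p \<in> space M" by (auto simp: space_pair_measure)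
  have grid_nonneg: "of_int \<lceil>real (Suc n) * max 0 (fst p)\<rceil> / real (Suc n) \<in> {0::real..}" for n
  proof -
    have "0 \<le> real (Suc n) * max 0 (fst p)" by simp
    then have "0 \<le> real_of_int \<lceil>real (Suc n) * max 0 (fst p)\<rceil>" by linarith
    then show ?thesis by simp
  qed
  show "(\<lambda>n. X (of_int \<lceil>real (Suc n) * max 0 (fst p)\<rceil> / real (Suc n)) (snd p)) \<longlonglongrightarrow> X (max 0 (fst p)) (snd p)"
    by (rule continuous_on_tendsto_compose[OF cont[OF \<open>snd p \<in> space M\<close>] LIMSEQ_ceiling_mult_divide])
      (use grid_nonneg in auto)
qed

section \<open>The solution of the SDE\<close>

text \<open>The exponential \<open>\<Phi>\<close> of the variation-of-constants formula in \<open>Zsol\<close>; by the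
  Gaussian moment generating function its expectation is \<open>e\<^sup>m\<^sup>s\<close>.\<close>

definition gbm :: "real \<Rightarrow> real \<Rightarrow> (real \<Rightarrow> 'a \<Rightarrow> real) \<Rightarrow> real \<Rightarrow> 'a \<Rightarrow> real" where
  "gbm m sg W s \<omega> = exp ((m - sg\<^sup>2 / 2) * s - sg * W s \<omega>)"

text \<open>\<open>W\<close> is only continuous on \<open>[0,\<infinity>)\<close>; freezing it at negative times makes it jointly measurable
  in \<open>(s,\<omega>)\<close>, as Fubini's theorem requires.\<close>

definition W_ext :: "(real \<Rightarrow> 'a \<Rightarrow> real) \<Rightarrow> real \<Rightarrow> 'a \<Rightarrow> real" where
  "W_ext W s \<omega> = W (max 0 s) \<omega>"

lemma gbm_pos: "gbm m sg W s \<omega> > 0"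
  by (simp add: gbm_def)

lemma gbm_W_ext: "0 \<le> s \<Longrightarrow> gbm m sg (W_ext W) s \<omega> = gbm m sg W s \<omega>"
  by (simp add: gbm_def W_ext_def)

lemma exp_mult_le_exp_abs:
  fixes m a T :: real
  assumes "0 \<le> a" "a \<le> T"
  shows "exp (m * a) \<le> exp (\<bar>m\<bar> * T)"
proof -
  have "m * a \<le> \<bar>m\<bar> * a" using assms by (intro mult_right_mono) auto
  also have "\<dots> \<le> \<bar>m\<bar> * T" using assms by (intro mult_left_mono) auto
  finally show ?thesis by simp
qed

lemma qf_bounds:
  assumes "r > 0" "T > 0" "0 \<le> t" "t \<le> T"
  shows "0 \<le> qf r T t" "qf r T t \<le> 1"
proof -
  have "exp (- r * (T - t)) \<le> 1" using assms by simp
  then show "0 \<le> qf r T t" unfolding qf_def using assms by (intro divide_nonneg_pos) auto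
  have "1 - r * (T - t) \<le> exp (- r * (T - t))" using exp_ge_add_one_self[of "- r * (T - t)"] by simp
  moreover have "r * (T - t) \<le> r * T" using assms by (intro mult_left_mono) auto
  ultimately have "1 - exp (- r * (T - t)) \<le> r * T" by linarith
  then show "qf r T t \<le> 1" unfolding qf_def using assms by (subst divide_le_eq_1_pos) auto
qed

lemma abs_divide_mult_pos: "(y::real) > 0 \<Longrightarrow> \<bar>w / y\<bar> * y = \<bar>w\<bar>"
  by (simp add: abs_div)

lemma Zsol_linear: "Zsol r T m sg W t z s \<omega> = Zsol r T m sg W t 0 s \<omega> + gbm m sg W s \<omega> * z"
  by (simp add: Zsol_def Let_def gbm_def algebra_simps)

lemma Zsol_abs_le:
  assumes "r > 0" "T > 0" "0 \<le> t" "0 \<le> s" "t + s \<le> T"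
    and cont: "continuous_on {0..s} (\<lambda>u. W u \<omega>)"
  shows "\<bar>Zsol r T m sg W t 0 s \<omega>\<bar>
    \<le> 1 + gbm m sg W s \<omega> + integral {0..s} (\<lambda>u. gbm m sg W s \<omega> / gbm m sg W u \<omega> / T)"
proof -
  let ?\<Phi> = "\<lambda>u. gbm m sg W u \<omega>"
  define F where "F u = (- exp (- r * (T - (t + u))) / T) / ?\<Phi> u" for u
  define G where "G u = 1 / T / ?\<Phi> u" for u
  have "continuous_on {0..s} ?\<Phi>" unfolding gbm_def by (intro continuous_intros cont)
  then have F: "F integrable_on {0..s}" and G: "G integrable_on {0..s}"
    unfolding F_def G_def using gbm_pos[of m sg W _ \<omega>] \<open>T > 0\<close>
    by (auto intro!: integrable_continuous_interval continuous_intros simp: less_imp_neq[symmetric])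
  have "norm (F u) \<le> G u" if "u \<in> {0..s}" for u
  proof -
    have "exp (- r * (T - (t + u))) \<le> 1" using that assms by simp
    then show ?thesis unfolding F_def G_def using gbm_pos[of m sg W u \<omega>] assms
      by (simp add: abs_div divide_right_mono)
  qed
  then have "\<bar>integral {0..s} F\<bar> \<le> integral {0..s} G"
    using integral_norm_bound_integral[OF F G] by simp
  moreover have "0 \<le> qf r T t" "qf r T t \<le> 1" "0 \<le> qf r T (t + s)" "qf r T (t + s) \<le> 1"
    using qf_bounds[of r T] assms by auto
  ultimately have "\<bar>qf r T t + integral {0..s} F\<bar> \<le> 1 + integral {0..s} G"
    using abs_triangle_ineq[of "qf r T t" "integral {0..s} F"] by linarith
  then have "?\<Phi> s * \<bar>qf r T t + integral {0..s} F\<bar> \<le> ?\<Phi> s * (1 + integral {0..s} G)"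
    using gbm_pos[of m sg W s \<omega>] by (intro mult_left_mono) auto
  moreover have "Zsol r T m sg W t 0 s \<omega> = qf r T (t + s) - ?\<Phi> s * (qf r T t + integral {0..s} F)"
    by (simp add: Zsol_def gbm_def Let_def F_def[abs_def])
  moreover have "\<bar>?\<Phi> s * (qf r T t + integral {0..s} F)\<bar> = ?\<Phi> s * \<bar>qf r T t + integral {0..s} F\<bar>"
    using gbm_pos[of m sg W s \<omega>] by (simp add: abs_mult)
  ultimately have "\<bar>Zsol r T m sg W t 0 s \<omega>\<bar> \<le> 1 + ?\<Phi> s + ?\<Phi> s * integral {0..s} G"
    using \<open>qf r T (t + s) \<le> 1\<close> \<open>0 \<le> qf r T (t + s)\<close> distrib_left[of "?\<Phi> s" 1 "integral {0..s} G"]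
      abs_triangle_ineq4[of "qf r T (t + s)" "?\<Phi> s * (qf r T t + integral {0..s} F)"]
    by linarith
  also have "?\<Phi> s * integral {0..s} G = integral {0..s} (\<lambda>u. ?\<Phi> s / ?\<Phi> u / T)"
    unfolding G_def integral_mult_right[symmetric] by (simp add: field_simps)
  finally show ?thesis .
qed

definition Zsol_majorant :: "real \<Rightarrow> real \<Rightarrow> real \<Rightarrow> (real \<Rightarrow> 'a \<Rightarrow> real) \<Rightarrow> real \<Rightarrow> 'a \<Rightarrow> ennreal" where
  "Zsol_majorant T m sg W s \<omega> = ennreal (1 + gbm m sg (W_ext W) s \<omega>)
     + (\<integral>\<^sup>+u\<in>{0..s}. ennreal (gbm m sg (W_ext W) s \<omega> / gbm m sg (W_ext W) u \<omega> / T) \<partial>lborel)"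

definition discount_weight :: "real \<Rightarrow> real \<Rightarrow> real \<Rightarrow> (real \<Rightarrow> 'a \<Rightarrow> real) \<Rightarrow> real \<Rightarrow> 'a \<Rightarrow> ennreal" where
  "discount_weight lam x sg W \<tau> \<omega> =
     ennreal (exp (- lam * x * \<tau>) * gbm (lam * (x - 1)) sg (W_ext W) \<tau> \<omega>)
     + (\<integral>\<^sup>+s\<in>{0..\<tau>}. ennreal (exp (- lam * x * s) * lam * gbm (lam * (x - 1)) sg (W_ext W) s \<omega>) \<partial>lborel)"

section \<open>Expectations over the Brownian motion\<close>

locale brownian_motion =
  fixes M :: "'a measure" and W :: "real \<Rightarrow> 'a \<Rightarrow> real"
  assumes standard_BM: "standard_BM M W"
begin

lemma BM_prob_space: "prob_space M"
  using standard_BM by (simp add: standard_BM_def)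

lemma BM_measurable[measurable]: "W t \<in> borel_measurable M"
  using standard_BM by (simp add: standard_BM_def)

lemma BM_continuous: "\<omega> \<in> space M \<Longrightarrow> continuous_on {0..} (\<lambda>t. W t \<omega>)"
  using standard_BM by (simp add: standard_BM_def)

lemma BM_zero: "\<omega> \<in> space M \<Longrightarrow> W 0 \<omega> = 0"
  using standard_BM by (simp add: standard_BM_def)

lemma BM_increment_distributed:
  "0 \<le> s \<Longrightarrow> s < t \<Longrightarrow>
    distributed M lborel (\<lambda>\<omega>. W t \<omega> - W s \<omega>) (\<lambda>x. ennreal (normal_density 0 (sqrt (t - s)) x))"
  using standard_BM by (simp add: standard_BM_def)

lemma W_ext_measurable[measurable (raw)]:
  assumes "f \<in> borel_measurable N" and "g \<in> measurable N M"
  shows "(\<lambda>x. W_ext W (f x) (g x)) \<in> borel_measurable N"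
proof -
  have "(\<lambda>x. (f x, g x)) \<in> measurable N ((lborel::real measure) \<Otimes>\<^sub>M M)"
    using assms by (auto intro!: measurable_Pair simp: measurable_lborel2)
  from measurable_compose[OF this borel_measurable_continuous_process[OF BM_measurable BM_continuous]]
  show ?thesis by (simp add: W_ext_def)
qed

lemma gbm_W_ext_measurable[measurable (raw)]:
  assumes [measurable]: "f \<in> borel_measurable N" "g \<in> measurable N M"
  shows "(\<lambda>x. gbm m sg (W_ext W) (f x) (g x)) \<in> borel_measurable N"
  unfolding gbm_def by measurable

lemma nn_integral_gbm_ratio:
  assumes "0 \<le> u" "u \<le> s"
  shows "(\<integral>\<^sup>+\<omega>. ennreal (gbm m sg W s \<omega> / gbm m sg W u \<omega>) \<partial>M) = ennreal (exp (m * (s - u)))"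
proof (cases "u = s")
  case True
  interpret prob_space M by (rule BM_prob_space)
  show ?thesis using True by (simp add: gbm_def emeasure_space_1)
next
  case False
  then have "u < s" using assms by simp
  have ratio: "gbm m sg W s \<omega> / gbm m sg W u \<omega>
      = exp ((m - sg\<^sup>2 / 2) * (s - u)) * exp ((- sg) * (W s \<omega> - W u \<omega>))" for \<omega>
    unfolding gbm_def exp_diff[symmetric] exp_add[symmetric]
    by (rule arg_cong[where f=exp]) (simp add: field_simps)
  have "(\<integral>\<^sup>+\<omega>. ennreal (gbm m sg W s \<omega> / gbm m sg W u \<omega>) \<partial>M)
      = ennreal (exp ((m - sg\<^sup>2 / 2) * (s - u))) * (\<integral>\<^sup>+\<omega>. ennreal (exp ((- sg) * (W s \<omega> - W u \<omega>))) \<partial>M)"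
    unfolding ratio by (subst nn_integral_cmult[symmetric]) (auto simp: ennreal_mult)
  also have "(\<integral>\<^sup>+\<omega>. ennreal (exp ((- sg) * (W s \<omega> - W u \<omega>))) \<partial>M)
      = ennreal (exp ((- sg)\<^sup>2 * (sqrt (s - u))\<^sup>2 / 2))"
    using \<open>u < s\<close> by (intro distributed_normal_nn_integral_exp BM_increment_distributed assms) simp_all
  also have "ennreal (exp ((m - sg\<^sup>2 / 2) * (s - u))) * ennreal (exp ((- sg)\<^sup>2 * (sqrt (s - u))\<^sup>2 / 2))
      = ennreal (exp (m * (s - u)))"
    using \<open>u < s\<close> by (simp add: ennreal_mult[symmetric] exp_add[symmetric] algebra_simps)
  finally show ?thesis .
qed

lemma nn_integral_gbm:
  assumes "0 \<le> s"
  shows "(\<integral>\<^sup>+\<omega>. ennreal (gbm m sg (W_ext W) s \<omega>) \<partial>M) = ennreal (exp (m * s))"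
proof -
  have "(\<integral>\<^sup>+\<omega>. ennreal (gbm m sg (W_ext W) s \<omega>) \<partial>M)
      = (\<integral>\<^sup>+\<omega>. ennreal (gbm m sg W s \<omega> / gbm m sg W 0 \<omega>) \<partial>M)"
    using assms by (intro nn_integral_cong) (simp add: gbm_def W_ext_def BM_zero)
  also have "\<dots> = ennreal (exp (m * s))"
    using nn_integral_gbm_ratio[of 0 s] assms by simp
  finally show ?thesis .
qed

lemma nn_integral_pair_lborel_swap:
  assumes "(\<lambda>p. f (fst p) (snd p)) \<in> borel_measurable ((lborel::real measure) \<Otimes>\<^sub>M M)"
  shows "(\<integral>\<^sup>+\<omega>. (\<integral>\<^sup>+s. f s \<omega> \<partial>lborel) \<partial>M) = (\<integral>\<^sup>+s. (\<integral>\<^sup>+\<omega>. f s \<omega> \<partial>M) \<partial>lborel)"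
proof -
  interpret pair_sigma_finite lborel M
    using prob_space_imp_sigma_finite[OF BM_prob_space] lborel.sigma_finite_measure_axioms
    by (simp add: pair_sigma_finite_def)
  show ?thesis using Fubini[OF assms] by simp
qed

lemma discount_weight_measurable[measurable]:
  "discount_weight lam x sg W \<tau> \<in> borel_measurable M"
  unfolding discount_weight_def by measurable

text \<open>With \<open>m = \<lambda> (x - 1)\<close> the discount \<open>exp (-\<lambda> x s)\<close> turns \<open>E \<Phi>(s) = exp (m s)\<close> into
  the exponential density \<open>\<lambda> exp (-\<lambda> s)\<close>.\<close>

lemma nn_integral_discount_weight:
  assumes \<tau>: "0 \<le> \<tau>" and lam: "0 \<le> lam"
  shows "(\<integral>\<^sup>+\<omega>. discount_weight lam x sg W \<tau> \<omega> \<partial>M) = 1"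
proof -
  interpret prob_space M by (rule BM_prob_space)
  let ?\<Phi> = "gbm (lam * (x - 1)) sg (W_ext W)"
  have discount: "ennreal (exp (- lam * x * s) * c) * ennreal (exp (lam * (x - 1) * s))
      = ennreal (exp (- lam * s) * c)" if "0 \<le> c" for s c
    using that by (simp add: ennreal_mult[symmetric] mult_exp_exp algebra_simps)
  have terminal: "(\<integral>\<^sup>+\<omega>. ennreal (exp (- lam * x * \<tau>) * ?\<Phi> \<tau> \<omega>) \<partial>M) = ennreal (exp (- lam * \<tau>))"
    using discount[of 1 \<tau>] \<tau>
    by (simp add: ennreal_mult less_imp_le[OF gbm_pos] nn_integral_cmult nn_integral_gbm)
  have "(\<integral>\<^sup>+\<omega>. (\<integral>\<^sup>+s\<in>{0..\<tau>}. ennreal (exp (- lam * x * s) * lam * ?\<Phi> s \<omega>) \<partial>lborel) \<partial>M)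
      = (\<integral>\<^sup>+s. (\<integral>\<^sup>+\<omega>. ennreal (exp (- lam * x * s) * lam * ?\<Phi> s \<omega>) * indicator {0..\<tau>} s \<partial>M) \<partial>lborel)"
    by (rule nn_integral_pair_lborel_swap) measurable
  also have "\<dots> = (\<integral>\<^sup>+s\<in>{0..\<tau>}. ennreal (lam * exp (- lam * s)) \<partial>lborel)"
  proof (intro nn_integral_cong)
    fix s
    show "(\<integral>\<^sup>+\<omega>. ennreal (exp (- lam * x * s) * lam * ?\<Phi> s \<omega>) * indicator {0..\<tau>} s \<partial>M)
        = ennreal (lam * exp (- lam * s)) * indicator {0..\<tau>} s"
      using discount[of lam s] lam
      by (cases "s \<in> {0..\<tau>}")
        (simp_all add: ennreal_mult less_imp_le[OF gbm_pos] nn_integral_cmult nn_integral_gbm mult.commute)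
  qed
  also have "\<dots> = ennreal (1 - exp (- lam * \<tau>))"
    by (rule nn_integral_exp_decay[OF \<tau> lam])
  finally have running: "(\<integral>\<^sup>+\<omega>. (\<integral>\<^sup>+s\<in>{0..\<tau>}. ennreal (exp (- lam * x * s) * lam * ?\<Phi> s \<omega>) \<partial>lborel) \<partial>M)
      = ennreal (1 - exp (- lam * \<tau>))" .
  have "(\<integral>\<^sup>+\<omega>. discount_weight lam x sg W \<tau> \<omega> \<partial>M)
      = ennreal (exp (- lam * \<tau>)) + ennreal (1 - exp (- lam * \<tau>))"
    unfolding discount_weight_def terminal[symmetric] running[symmetric] by (rule nn_integral_add) measurable
  also have "\<dots> = 1"
    using \<tau> lam by (subst ennreal_plus[symmetric]) (simp_all add: mult_nonneg_nonneg)
  finally show ?thesis .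
qed

lemma Zsol_majorant_measurable[measurable (raw)]:
  assumes [measurable]: "f \<in> borel_measurable N" "g \<in> measurable N M"
  shows "(\<lambda>x. Zsol_majorant T m sg W (f x) (g x)) \<in> borel_measurable N"
  unfolding Zsol_majorant_def by measurable

lemma abs_Zsol_le_majorant:
  assumes "r > 0" "T > 0" "0 \<le> t" "0 \<le> s" "t + s \<le> T" and \<omega>: "\<omega> \<in> space M"
  shows "ennreal \<bar>Zsol r T m sg W t 0 s \<omega>\<bar> \<le> Zsol_majorant T m sg W s \<omega>"
proof -
  let ?\<Phi> = "\<lambda>u. gbm m sg W u \<omega>"
  let ?I = "integral {0..s} (\<lambda>u. ?\<Phi> s / ?\<Phi> u / T)"
  have cont: "continuous_on {0..s} (\<lambda>u. W u \<omega>)"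
    using BM_continuous[OF \<omega>] by (rule continuous_on_subset) auto
  have nonneg: "0 \<le> ?\<Phi> s / ?\<Phi> u / T" for u
    using gbm_pos[of m sg W _ \<omega>] \<open>T > 0\<close> by (simp add: less_imp_le)
  have "continuous_on {0..s} ?\<Phi>" unfolding gbm_def by (intro continuous_intros cont)
  then have int: "(\<lambda>u. ?\<Phi> s / ?\<Phi> u / T) integrable_on {0..s}"
    using gbm_pos[of m sg W _ \<omega>] \<open>T > 0\<close>
    by (auto intro!: integrable_continuous_interval continuous_intros simp: less_imp_neq[symmetric])
  then have "ennreal ?I = (\<integral>\<^sup>+u. ennreal (indicator {0..s} u * (?\<Phi> s / ?\<Phi> u / T)) \<partial>lborel)"
    using nonneg by (intro nn_integral_has_integral_lebesgue[symmetric]) auto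
  also have "\<dots> = (\<integral>\<^sup>+u\<in>{0..s}. ennreal (gbm m sg (W_ext W) s \<omega> / gbm m sg (W_ext W) u \<omega> / T) \<partial>lborel)"
    using \<open>0 \<le> s\<close> by (intro nn_integral_cong) (auto simp: gbm_W_ext split: split_indicator)
  finally have I: "ennreal ?I = \<dots>" .
  have "\<bar>Zsol r T m sg W t 0 s \<omega>\<bar> \<le> (1 + ?\<Phi> s) + ?I"
    using Zsol_abs_le[where W=W and \<omega>=\<omega>, OF assms(1-5) cont] by simp
  then have "ennreal \<bar>Zsol r T m sg W t 0 s \<omega>\<bar> \<le> ennreal ((1 + ?\<Phi> s) + ?I)"
    by (rule ennreal_leI)
  also have "\<dots> = ennreal (1 + ?\<Phi> s) + ennreal ?I"
    using gbm_pos[of m sg W s \<omega>] integral_nonneg[OF int] nonneg by (intro ennreal_plus) auto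
  finally show ?thesis
    unfolding I using \<open>0 \<le> s\<close> by (simp add: Zsol_majorant_def gbm_W_ext)
qed

lemma nn_integral_gbm_ratio_integral_le:
  assumes s: "0 \<le> s" "s \<le> T"
  shows "(\<integral>\<^sup>+\<omega>. (\<integral>\<^sup>+u\<in>{0..s}. ennreal (gbm m sg (W_ext W) s \<omega> / gbm m sg (W_ext W) u \<omega> / T) \<partial>lborel) \<partial>M)
    \<le> ennreal (exp (\<bar>m\<bar> * T))"
proof -
  let ?\<Phi> = "gbm m sg (W_ext W)"
  define E where "E = exp (\<bar>m\<bar> * T)"
  have ratio: "(\<integral>\<^sup>+\<omega>. ennreal (?\<Phi> s \<omega> / ?\<Phi> u \<omega> / T) * indicator {0..s} u \<partial>M)
      \<le> ennreal (E / T) * indicator {0..s} u" for u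
  proof (cases "u \<in> {0..s}")
    case True
    have "(\<integral>\<^sup>+\<omega>. ennreal (?\<Phi> s \<omega> / ?\<Phi> u \<omega> / T) \<partial>M)
        = (\<integral>\<^sup>+\<omega>. ennreal (1 / T) * ennreal (gbm m sg W s \<omega> / gbm m sg W u \<omega>) \<partial>M)"
      using True s gbm_pos[of m sg W]
      by (intro nn_integral_cong) (auto simp: gbm_W_ext ennreal_mult[symmetric] less_imp_le)
    also have "\<dots> = ennreal (1 / T) * ennreal (exp (m * (s - u)))"
      using True by (subst nn_integral_cmult) (simp_all add: gbm_def nn_integral_gbm_ratio[unfolded gbm_def])
    also have "\<dots> \<le> ennreal (1 / T) * ennreal E"
      using True s unfolding E_def by (intro mult_left_mono ennreal_leI exp_mult_le_exp_abs) auto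
    finally show ?thesis
      using True s by (simp add: ennreal_mult[symmetric] divide_nonneg_nonneg E_def)
  qed simp
  have "(\<integral>\<^sup>+\<omega>. (\<integral>\<^sup>+u\<in>{0..s}. ennreal (?\<Phi> s \<omega> / ?\<Phi> u \<omega> / T) \<partial>lborel) \<partial>M)
      = (\<integral>\<^sup>+u. (\<integral>\<^sup>+\<omega>. ennreal (?\<Phi> s \<omega> / ?\<Phi> u \<omega> / T) * indicator {0..s} u \<partial>M) \<partial>lborel)"
    by (rule nn_integral_pair_lborel_swap) measurable
  also have "\<dots> \<le> (\<integral>\<^sup>+u\<in>{0..s}. ennreal (E / T) \<partial>lborel)"
    by (intro nn_integral_mono ratio)
  also have "\<dots> = ennreal (E / T * s)"
    using s by (simp add: nn_integral_cmult_indicator ennreal_mult[symmetric] E_def)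
  also have "\<dots> \<le> ennreal E"
  proof (intro ennreal_leI)
    have "s / T \<le> 1" using s by (cases "T = 0") (auto simp: divide_le_eq_1)
    then show "E / T * s \<le> E"
      using mult_left_le[of "s / T" E] by (simp add: E_def)
  qed
  finally show ?thesis unfolding E_def .
qed

lemma nn_integral_Zsol_majorant:
  assumes s: "0 \<le> s" "s \<le> T"
  shows "(\<integral>\<^sup>+\<omega>. Zsol_majorant T m sg W s \<omega> \<partial>M) \<le> ennreal (1 + 2 * exp (\<bar>m\<bar> * T))"
proof -
  interpret prob_space M by (rule BM_prob_space)
  let ?\<Phi> = "gbm m sg (W_ext W)"
  have "(\<integral>\<^sup>+\<omega>. ennreal (1 + ?\<Phi> s \<omega>) \<partial>M) = (\<integral>\<^sup>+\<omega>. 1 + ennreal (?\<Phi> s \<omega>) \<partial>M)"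
    using gbm_pos[of m sg "W_ext W" s] by (intro nn_integral_cong) (simp add: ennreal_plus less_imp_le)
  also have "\<dots> = ennreal (1 + exp (m * s))"
    by (subst nn_integral_add) (simp_all add: emeasure_space_1 nn_integral_gbm s ennreal_plus)
  also have "\<dots> \<le> ennreal (1 + exp (\<bar>m\<bar> * T))"
    using exp_mult_le_exp_abs[OF s] by (intro ennreal_leI) simp
  finally have terminal: "(\<integral>\<^sup>+\<omega>. ennreal (1 + ?\<Phi> s \<omega>) \<partial>M) \<le> ennreal (1 + exp (\<bar>m\<bar> * T))" .
  have "(\<integral>\<^sup>+\<omega>. Zsol_majorant T m sg W s \<omega> \<partial>M)
      = (\<integral>\<^sup>+\<omega>. ennreal (1 + ?\<Phi> s \<omega>) \<partial>M)
        + (\<integral>\<^sup>+\<omega>. (\<integral>\<^sup>+u\<in>{0..s}. ennreal (?\<Phi> s \<omega> / ?\<Phi> u \<omega> / T) \<partial>lborel) \<partial>M)"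
    unfolding Zsol_majorant_def by (rule nn_integral_add) measurable
  also have "\<dots> \<le> ennreal (1 + exp (\<bar>m\<bar> * T)) + ennreal (exp (\<bar>m\<bar> * T))"
    by (rule add_mono[OF terminal nn_integral_gbm_ratio_integral_le[OF s]])
  also have "\<dots> = ennreal (1 + 2 * exp (\<bar>m\<bar> * T))"
    by (simp add: ennreal_plus[symmetric] del: ennreal_plus)
  finally show ?thesis .
qed

lemma nn_integral_integral_Zsol_majorant_finite:
  assumes "0 \<le> \<tau>" "\<tau> \<le> T" "0 \<le> C"
  shows "(\<integral>\<^sup>+\<omega>. (\<integral>\<^sup>+s\<in>{0..\<tau>}. ennreal a * (ennreal C + Zsol_majorant T m sg W s \<omega>) \<partial>lborel) \<partial>M) < \<infinity>"
proof -
  interpret prob_space M by (rule BM_prob_space)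
  define K where "K = 1 + 2 * exp (\<bar>m\<bar> * T)"
  let ?R = "Zsol_majorant T m sg W"
  have bound: "(\<integral>\<^sup>+\<omega>. ennreal a * (ennreal C + ?R s \<omega>) * indicator {0..\<tau>} s \<partial>M)
      \<le> ennreal a * (ennreal C + ennreal K) * indicator {0..\<tau>} s" for s
  proof (cases "s \<in> {0..\<tau>}")
    case True
    have "(\<integral>\<^sup>+\<omega>. ennreal a * (ennreal C + ?R s \<omega>) \<partial>M) = ennreal a * (ennreal C + (\<integral>\<^sup>+\<omega>. ?R s \<omega> \<partial>M))"
      by (simp add: nn_integral_cmult nn_integral_add emeasure_space_1)
    also have "\<dots> \<le> ennreal a * (ennreal C + ennreal K)"
      using True assms unfolding K_def by (intro mult_left_mono add_left_mono nn_integral_Zsol_majorant) auto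
    finally show ?thesis using True by simp
  qed simp
  have "(\<integral>\<^sup>+\<omega>. (\<integral>\<^sup>+s\<in>{0..\<tau>}. ennreal a * (ennreal C + ?R s \<omega>) \<partial>lborel) \<partial>M)
      = (\<integral>\<^sup>+s. (\<integral>\<^sup>+\<omega>. ennreal a * (ennreal C + ?R s \<omega>) * indicator {0..\<tau>} s \<partial>M) \<partial>lborel)"
    by (rule nn_integral_pair_lborel_swap) measurable
  also have "\<dots> \<le> (\<integral>\<^sup>+s\<in>{0..\<tau>}. ennreal a * (ennreal C + ennreal K) \<partial>lborel)"
    by (intro nn_integral_mono bound)
  also have "\<dots> < \<infinity>"
    using assms by (simp add: nn_integral_cmult_indicator ennreal_mult_less_top flip: ennreal_plus)
  finally show ?thesis .
qed
end

section \<open>The jump operator \<open>P\<close>\<close>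

locale jump_law =
  fixes nu :: "real measure"
  assumes nu_prob: "prob_space nu" and nu_sets[measurable_cong]: "sets nu = sets borel"
    and nu_nonpos: "emeasure nu {..0} = 0" and nu_integrable: "integrable nu (\<lambda>y. y)"
begin

lemma AE_nu_pos: "AE y in nu. y > 0"
proof (rule AE_I')
  show "{..0} \<in> null_sets nu" using nu_nonpos nu_sets by (auto simp: null_sets_def)
qed auto

lemma xi_pos: "xi nu > 0"
proof -
  have nonneg: "AE y in nu. 0 \<le> y" using AE_nu_pos by eventually_elim auto
  then have "xi nu \<ge> 0" unfolding xi_def by (rule integral_nonneg_AE)
  moreover have "xi nu \<noteq> 0"
  proof
    assume "xi nu = 0"
    then have "AE y in nu. y = 0"
      using integral_nonneg_eq_0_iff_AE[OF nu_integrable nonneg] by (simp add: xi_def)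
    with AE_nu_pos have "AE y in nu. False" by eventually_elim auto
    then show False using prob_space.AE_False[OF nu_prob] by simp
  qed
  ultimately show ?thesis by simp
qed

lemma Pop_mono:
  assumes "\<And>z. f z t \<le> g z t"
  shows "Pop nu r T f x t \<le> Pop nu r T g x t"
  unfolding Pop_def using AE_nu_pos
  by (intro nn_integral_mono_AE) (auto elim!: eventually_mono intro!: ennreal_leI mult_right_mono assms)

text \<open>The change of variables \<open>z \<mapsto> z/y + q(y-1)/y\<close> contracts by \<open>1/y\<close>, which the weight \<open>y\<close>
  compensates exactly.\<close>

lemma Pop_lipschitz:
  assumes nonneg: "\<And>z. 0 \<le> f z t" and lip: "\<And>z z'. \<bar>f z t - f z' t\<bar> \<le> \<bar>z - z'\<bar>"
  shows "Pop nu r T f (x + d) t \<le> Pop nu r T f x t + ennreal \<bar>d\<bar>"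
proof -
  let ?y = "\<lambda>x y. x / y + qf r T t * (y - 1) / y"
  have "Pop nu r T f (x + d) t \<le> (\<integral>\<^sup>+y. ennreal (f (?y x y) t * y) + ennreal \<bar>d\<bar> \<partial>nu)"
    unfolding Pop_def using AE_nu_pos
  proof (intro nn_integral_mono_AE, elim eventually_mono)
    fix y :: real assume "0 < y"
    have "f (?y (x + d) y) t \<le> f (?y x y) t + \<bar>?y (x + d) y - ?y x y\<bar>"
      using lip[of "?y (x + d) y" "?y x y"] by linarith
    also have "?y (x + d) y - ?y x y = d / y" by (simp add: diff_divide_distrib[symmetric])
    finally have "f (?y (x + d) y) t * y \<le> f (?y x y) t * y + \<bar>d\<bar>"
      using \<open>0 < y\<close> abs_divide_mult_pos[OF \<open>0 < y\<close>, of d]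
      by (metis distrib_right less_eq_real_def mult_right_mono)
    then show "ennreal (f (?y (x + d) y) t * y) \<le> ennreal (f (?y x y) t * y) + ennreal \<bar>d\<bar>"
      using \<open>0 < y\<close> nonneg by (simp add: ennreal_plus[symmetric] ennreal_leI del: ennreal_plus)
  qed
  also have "\<dots> \<le> Pop nu r T f x t + (\<integral>\<^sup>+y. ennreal \<bar>d\<bar> \<partial>nu)"
    unfolding Pop_def by (rule nn_integral_add_le) simp
  also have "(\<integral>\<^sup>+y. ennreal \<bar>d\<bar> \<partial>nu) = ennreal \<bar>d\<bar>"
    by (simp add: prob_space.emeasure_space_1[OF nu_prob])
  finally show ?thesis .
qed

lemma Pop_abs_bound:
  assumes "r > 0" "T > 0" "0 \<le> t" "t \<le> T" "0 \<le> c"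
  shows "Pop nu r T (\<lambda>z t. c + \<bar>z\<bar>) x t \<le> ennreal ((c + 1) * xi nu + 1) + ennreal \<bar>x\<bar>"
proof -
  interpret prob_space nu by (rule nu_prob)
  let ?q = "qf r T t"
  have q: "0 \<le> ?q" "?q \<le> 1" using qf_bounds[OF assms(1-4)] by auto
  have "Pop nu r T (\<lambda>z t. c + \<bar>z\<bar>) x t \<le> (\<integral>\<^sup>+y. ennreal ((c + 1) * y + (\<bar>x\<bar> + 1)) \<partial>nu)"
    unfolding Pop_def using AE_nu_pos
  proof (intro nn_integral_mono_AE, elim eventually_mono)
    fix y :: real assume "0 < y"
    have "\<bar>?q * (y - 1)\<bar> \<le> \<bar>y - 1\<bar>" using q by (simp add: abs_mult mult_left_le_one_le)
    moreover have "x / y + ?q * (y - 1) / y = (x + ?q * (y - 1)) / y" by (simp add: add_divide_distrib)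
    ultimately have "(c + \<bar>x / y + ?q * (y - 1) / y\<bar>) * y \<le> (c + 1) * y + (\<bar>x\<bar> + 1)"
      using \<open>0 < y\<close> abs_divide_mult_pos[OF \<open>0 < y\<close>, of "x + ?q * (y - 1)"]
      by (auto simp: algebra_simps)
    then show "ennreal ((c + \<bar>x / y + ?q * (y - 1) / y\<bar>) * y) \<le> ennreal ((c + 1) * y + (\<bar>x\<bar> + 1))"
      by (rule ennreal_leI)
  qed
  also have "\<dots> = ennreal (\<integral>y. (c + 1) * y + (\<bar>x\<bar> + 1) \<partial>nu)"
    using AE_nu_pos nu_integrable assms(5)
    by (intro nn_integral_eq_integral) (auto elim!: eventually_mono intro!: add_nonneg_nonneg)
  also have "(\<integral>y. (c + 1) * y + (\<bar>x\<bar> + 1) \<partial>nu) = (c + 1) * xi nu + (\<bar>x\<bar> + 1)"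
    using nu_integrable by (simp add: xi_def prob_space)
  also have "ennreal ((c + 1) * xi nu + (\<bar>x\<bar> + 1)) = ennreal ((c + 1) * xi nu + 1) + ennreal \<bar>x\<bar>"
    using xi_pos assms(5) by (subst ennreal_plus[symmetric]) (auto simp: algebra_simps)
  finally show ?thesis .
qed

end

section \<open>The operator \<open>J\<close>\<close>

lemma discounted_payoff_shift_le:
  fixes zeta e p a z K :: real
  assumes "zeta \<in> {-1, 1}" "0 \<le> e" "0 \<le> p"
  shows "ennreal (e * max 0 (zeta * (a + p * z - K)))
    \<le> ennreal (e * max 0 (zeta * (a - K))) + ennreal \<bar>z\<bar> * ennreal (e * p)"
proof -
  have "max 0 (zeta * (a + b - K)) \<le> max 0 (zeta * (a - K)) + \<bar>b\<bar>" for b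
    using assms(1) by (auto simp: max_def abs_if)
  from mult_left_mono[OF this[of "p * z"] \<open>0 \<le> e\<close>]
  have "e * max 0 (zeta * (a + p * z - K)) \<le> e * max 0 (zeta * (a - K)) + \<bar>z\<bar> * (e * p)"
    using assms(3) by (simp add: abs_mult algebra_simps)
  then show ?thesis
    using assms(2,3) by (simp add: ennreal_mult[symmetric] ennreal_plus[symmetric] ennreal_leI del: ennreal_plus)
qed

locale J_operator = brownian_motion M W + jump_law nu
  for M :: "'a measure" and W :: "real \<Rightarrow> 'a \<Rightarrow> real" and nu :: "real measure" +
  fixes r sg lam T K1 zeta :: real
  assumes r_pos: "r > 0" and lam_pos: "lam > 0" and T_pos: "T > 0" and K1_nonneg: "K1 \<ge> 0"
    and zeta: "zeta \<in> {-1, 1}"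
begin

definition J_integrand :: "(real \<Rightarrow> real \<Rightarrow> real) \<Rightarrow> real \<Rightarrow> real \<Rightarrow> 'a \<Rightarrow> ennreal" where
  "J_integrand f z t \<omega> =
     ennreal (exp (- lam * xi nu * (T - t)) * max 0 (zeta * (Zsol r T (mu lam nu) sg W t z (T - t) \<omega> - K1)))
     + (\<integral>\<^sup>+s\<in>{0..T - t}. ennreal (exp (- lam * xi nu * s) * lam)
          * Pop nu r T f (Zsol r T (mu lam nu) sg W t z s \<omega>) (t + s) \<partial>lborel)"

lemma Jop_eq_enn2real: "Jop M W nu r sg lam T K1 zeta f z t = enn2real (\<integral>\<^sup>+\<omega>. J_integrand f z t \<omega> \<partial>M)"
  by (simp add: Jop_def J_integrand_def)

lemma J_integrand_mono:
  assumes "\<And>z t'. t' \<in> {0..T} \<Longrightarrow> f z t' \<le> g z t'" and "0 \<le> t"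
  shows "J_integrand f z t \<omega> \<le> J_integrand g z t \<omega>"
  unfolding J_integrand_def
proof (intro add_mono order_refl nn_integral_mono)
  fix s
  show "ennreal (exp (- lam * xi nu * s) * lam) * Pop nu r T f (Zsol r T (mu lam nu) sg W t z s \<omega>) (t + s)
        * indicator {0..T - t} s
      \<le> ennreal (exp (- lam * xi nu * s) * lam) * Pop nu r T g (Zsol r T (mu lam nu) sg W t z s \<omega>) (t + s)
        * indicator {0..T - t} s"
    using assms by (cases "s \<in> {0..T - t}") (auto intro!: mult_right_mono mult_left_mono Pop_mono)
qed

lemma J_integrand_shift_le:
  assumes nonneg: "\<And>z t'. t' \<in> {0..T} \<Longrightarrow> 0 \<le> f z t'"
    and lip: "\<And>z z' t'. t' \<in> {0..T} \<Longrightarrow> \<bar>f z t' - f z' t'\<bar> \<le> \<bar>z - z'\<bar>"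
    and t: "0 \<le> t" "t \<le> T" and \<omega>: "\<omega> \<in> space M"
  shows "J_integrand f z t \<omega> \<le> J_integrand f 0 t \<omega> + ennreal \<bar>z\<bar> * discount_weight lam (xi nu) sg W (T - t) \<omega>"
proof -
  let ?Z = "\<lambda>z s. Zsol r T (mu lam nu) sg W t z s \<omega>"
  let ?\<Phi> = "\<lambda>s. gbm (mu lam nu) sg (W_ext W) s \<omega>"
  let ?e = "\<lambda>s. exp (- lam * xi nu * s)"
  have Z: "?Z z s = ?Z 0 s + ?\<Phi> s * z" if "0 \<le> s" for s
    using that by (simp add: Zsol_linear[of r T _ sg W t z] gbm_W_ext)
  have \<Phi>: "0 \<le> ?\<Phi> s" for s by (simp add: less_imp_le[OF gbm_pos])
  have terminal: "ennreal (?e (T - t) * max 0 (zeta * (?Z z (T - t) - K1)))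
      \<le> ennreal (?e (T - t) * max 0 (zeta * (?Z 0 (T - t) - K1)))
        + ennreal \<bar>z\<bar> * ennreal (?e (T - t) * ?\<Phi> (T - t))"
    unfolding Z[of "T - t", OF diff_ge_0_iff_ge[THEN iffD2, OF t(2)]]
    by (intro discounted_payoff_shift_le zeta exp_ge_zero \<Phi>)
  have "ennreal (?e s * lam) * Pop nu r T f (?Z z s) (t + s) * indicator {0..T - t} s
      \<le> ennreal (?e s * lam) * Pop nu r T f (?Z 0 s) (t + s) * indicator {0..T - t} s
        + ennreal \<bar>z\<bar> * (ennreal (?e s * lam * ?\<Phi> s) * indicator {0..T - t} s)" for s
  proof (cases "s \<in> {0..T - t}")
    case True
    then have "t + s \<in> {0..T}" using t by auto
    then have "Pop nu r T f (?Z 0 s + ?\<Phi> s * z) (t + s) \<le> Pop nu r T f (?Z 0 s) (t + s) + ennreal \<bar>?\<Phi> s * z\<bar>"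
      by (intro Pop_lipschitz nonneg lip)
    then have "ennreal (?e s * lam) * Pop nu r T f (?Z z s) (t + s)
        \<le> ennreal (?e s * lam) * Pop nu r T f (?Z 0 s) (t + s) + ennreal (?e s * lam) * ennreal (\<bar>z\<bar> * ?\<Phi> s)"
      using True Z[of s] \<Phi>[of s] by (auto simp: abs_mult mult.commute distrib_left[symmetric] intro: mult_left_mono)
    also have "ennreal (?e s * lam) * ennreal (\<bar>z\<bar> * ?\<Phi> s) = ennreal \<bar>z\<bar> * ennreal (?e s * lam * ?\<Phi> s)"
      using lam_pos \<Phi>[of s] by (simp add: ennreal_mult[symmetric] mult_ac)
    finally show ?thesis using True by simp
  qed simp
  then have "(\<integral>\<^sup>+s\<in>{0..T - t}. ennreal (?e s * lam) * Pop nu r T f (?Z z s) (t + s) \<partial>lborel)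
      \<le> (\<integral>\<^sup>+s\<in>{0..T - t}. ennreal (?e s * lam) * Pop nu r T f (?Z 0 s) (t + s) \<partial>lborel)
        + (\<integral>\<^sup>+s. ennreal \<bar>z\<bar> * (ennreal (?e s * lam * ?\<Phi> s) * indicator {0..T - t} s) \<partial>lborel)"
    using \<omega> by (intro order_trans[OF nn_integral_mono nn_integral_add_le]) (auto, measurable)
  also have "(\<integral>\<^sup>+s. ennreal \<bar>z\<bar> * (ennreal (?e s * lam * ?\<Phi> s) * indicator {0..T - t} s) \<partial>lborel)
      = ennreal \<bar>z\<bar> * (\<integral>\<^sup>+s\<in>{0..T - t}. ennreal (?e s * lam * ?\<Phi> s) \<partial>lborel)"
    using \<omega> by (intro nn_integral_cmult) measurable
  finally have running: "(\<integral>\<^sup>+s\<in>{0..T - t}. ennreal (?e s * lam) * Pop nu r T f (?Z z s) (t + s) \<partial>lborel)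
      \<le> (\<integral>\<^sup>+s\<in>{0..T - t}. ennreal (?e s * lam) * Pop nu r T f (?Z 0 s) (t + s) \<partial>lborel)
        + ennreal \<bar>z\<bar> * (\<integral>\<^sup>+s\<in>{0..T - t}. ennreal (?e s * lam * ?\<Phi> s) \<partial>lborel)" .
  from add_mono[OF terminal running] show ?thesis
    unfolding J_integrand_def discount_weight_def mu_def[symmetric] by (simp add: distrib_left add_ac)
qed

lemma J_integrand_abs_le:
  assumes c: "0 \<le> c" and t: "0 \<le> t" "t \<le> T" and \<omega>: "\<omega> \<in> space M"
  shows "J_integrand (\<lambda>z t. c + \<bar>z\<bar>) 0 t \<omega>
    \<le> ennreal K1 + Zsol_majorant T (mu lam nu) sg W (T - t) \<omega>
      + (\<integral>\<^sup>+s\<in>{0..T - t}. ennreal lam * (ennreal ((c + 1) * xi nu + 1)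
          + Zsol_majorant T (mu lam nu) sg W s \<omega>) \<partial>lborel)"
proof -
  let ?Z = "\<lambda>s. Zsol r T (mu lam nu) sg W t 0 s \<omega>"
  let ?e = "\<lambda>s. exp (- lam * xi nu * s)"
  have e_le_1: "?e s \<le> 1" if "0 \<le> s" for s
    using that lam_pos xi_pos by simp
  have Z: "ennreal \<bar>?Z s\<bar> \<le> Zsol_majorant T (mu lam nu) sg W s \<omega>" if "s \<in> {0..T - t}" for s
    using that t by (intro abs_Zsol_le_majorant r_pos T_pos \<omega>) auto
  have "?e (T - t) * max 0 (zeta * (?Z (T - t) - K1)) \<le> K1 + \<bar>?Z (T - t)\<bar>"
    using zeta K1_nonneg e_le_1[of "T - t"] t
    by (intro order_trans[OF mult_left_le_one_le]) (auto simp: max_def abs_if)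
  then have "ennreal (?e (T - t) * max 0 (zeta * (?Z (T - t) - K1))) \<le> ennreal K1 + ennreal \<bar>?Z (T - t)\<bar>"
    using K1_nonneg by (simp add: ennreal_plus[symmetric] ennreal_leI del: ennreal_plus)
  also have "\<dots> \<le> ennreal K1 + Zsol_majorant T (mu lam nu) sg W (T - t) \<omega>"
    using Z t by (intro add_left_mono) auto
  finally have terminal: "ennreal (?e (T - t) * max 0 (zeta * (?Z (T - t) - K1)))
      \<le> ennreal K1 + Zsol_majorant T (mu lam nu) sg W (T - t) \<omega>" .
  have running: "ennreal (?e s * lam) * Pop nu r T (\<lambda>z t. c + \<bar>z\<bar>) (?Z s) (t + s) * indicator {0..T - t} s
      \<le> ennreal lam * (ennreal ((c + 1) * xi nu + 1) + Zsol_majorant T (mu lam nu) sg W s \<omega>)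
        * indicator {0..T - t} s" for s
  proof (cases "s \<in> {0..T - t}")
    case True
    have "Pop nu r T (\<lambda>z t. c + \<bar>z\<bar>) (?Z s) (t + s) \<le> ennreal ((c + 1) * xi nu + 1) + ennreal \<bar>?Z s\<bar>"
      using True t c by (intro Pop_abs_bound r_pos T_pos) auto
    also have "\<dots> \<le> ennreal ((c + 1) * xi nu + 1) + Zsol_majorant T (mu lam nu) sg W s \<omega>"
      using Z[OF True] by (rule add_left_mono)
    finally show ?thesis
      using True e_le_1[of s] lam_pos by (auto intro!: mult_mono ennreal_leI mult_left_le_one_le)
  qed simp
  show ?thesis
    unfolding J_integrand_def by (intro add_mono terminal nn_integral_mono running)
qed

text \<open>Needed because \<open>enn2real\<close> maps \<open>\<infinity>\<close> to \<open>0\<close>, so a bound on \<open>Jop\<close> alone says nothing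
  about an infinite expectation.\<close>

lemma nn_integral_J_integrand_abs_finite:
  assumes c: "0 \<le> c" and t: "0 \<le> t" "t \<le> T"
  shows "(\<integral>\<^sup>+\<omega>. J_integrand (\<lambda>z t. c + \<bar>z\<bar>) 0 t \<omega> \<partial>M) < \<infinity>"
proof -
  interpret prob_space M by (rule BM_prob_space)
  define C where "C = (c + 1) * xi nu + 1"
  let ?R = "Zsol_majorant T (mu lam nu) sg W"
  have "(\<integral>\<^sup>+\<omega>. ennreal K1 + ?R (T - t) \<omega> \<partial>M) \<le> ennreal K1 + ennreal (1 + 2 * exp (\<bar>mu lam nu\<bar> * T))"
    using nn_integral_Zsol_majorant[of "T - t"] t
    by (simp add: nn_integral_add emeasure_space_1 add_left_mono)
  then have terminal: "(\<integral>\<^sup>+\<omega>. ennreal K1 + ?R (T - t) \<omega> \<partial>M) < \<infinity>"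
    by (simp add: le_less_trans flip: ennreal_plus)
  have running: "(\<integral>\<^sup>+\<omega>. (\<integral>\<^sup>+s\<in>{0..T - t}. ennreal lam * (ennreal C + ?R s \<omega>) \<partial>lborel) \<partial>M) < \<infinity>"
    using t c xi_pos by (intro nn_integral_integral_Zsol_majorant_finite) (auto simp: C_def)
  have "(\<integral>\<^sup>+\<omega>. J_integrand (\<lambda>z t. c + \<bar>z\<bar>) 0 t \<omega> \<partial>M)
      \<le> (\<integral>\<^sup>+\<omega>. ennreal K1 + ?R (T - t) \<omega>
           + (\<integral>\<^sup>+s\<in>{0..T - t}. ennreal lam * (ennreal C + ?R s \<omega>) \<partial>lborel) \<partial>M)"
    unfolding C_def by (intro nn_integral_mono J_integrand_abs_le c t)
  also have "\<dots> = (\<integral>\<^sup>+\<omega>. ennreal K1 + ?R (T - t) \<omega> \<partial>M)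
      + (\<integral>\<^sup>+\<omega>. (\<integral>\<^sup>+s\<in>{0..T - t}. ennreal lam * (ennreal C + ?R s \<omega>) \<partial>lborel) \<partial>M)"
    by (rule nn_integral_add) measurable
  also have "\<dots> < \<infinity>"
    using terminal running by simp
  finally show ?thesis .
qed

lemma Jop_abs_bound:
  assumes c: "0 \<le> c" and fixed: "\<And>t. t \<in> {0..T} \<Longrightarrow> Jop M W nu r sg lam T K1 zeta (\<lambda>z t. c + \<bar>z\<bar>) 0 t \<le> c"
    and f: "\<And>z t. t \<in> {0..T} \<Longrightarrow> f z t \<le> c + \<bar>z\<bar>" and t: "t \<in> {0..T}"
  shows "Jop M W nu r sg lam T K1 zeta f z t \<le> c + \<bar>z\<bar>"
proof -
  interpret prob_space M by (rule BM_prob_space)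
  let ?L = "\<lambda>z t. c + \<bar>z\<bar>"
  have "(\<integral>\<^sup>+\<omega>. J_integrand ?L 0 t \<omega> \<partial>M) < \<infinity>"
    using t c by (intro nn_integral_J_integrand_abs_finite) auto
  with fixed[OF t] have L0: "(\<integral>\<^sup>+\<omega>. J_integrand ?L 0 t \<omega> \<partial>M) \<le> ennreal c"
    by (cases "\<integral>\<^sup>+\<omega>. J_integrand ?L 0 t \<omega> \<partial>M") (auto simp: Jop_eq_enn2real)
  have "(\<integral>\<^sup>+\<omega>. J_integrand f z t \<omega> \<partial>M)
      \<le> (\<integral>\<^sup>+\<omega>. J_integrand ?L 0 t \<omega> + ennreal \<bar>z\<bar> * discount_weight lam (xi nu) sg W (T - t) \<omega> \<partial>M)"
  proof (intro nn_integral_mono order_trans[OF J_integrand_mono J_integrand_shift_le])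
    show "\<And>z' z'' t'. t' \<in> {0..T} \<Longrightarrow> \<bar>?L z' t' - ?L z'' t'\<bar> \<le> \<bar>z' - z''\<bar>"
      by (simp add: abs_triangle_ineq3)
  qed (use f t c in auto)
  also have "\<dots> \<le> (\<integral>\<^sup>+\<omega>. J_integrand ?L 0 t \<omega> \<partial>M)
      + (\<integral>\<^sup>+\<omega>. ennreal \<bar>z\<bar> * discount_weight lam (xi nu) sg W (T - t) \<omega> \<partial>M)"
    by (rule nn_integral_add_le) measurable
  also have "(\<integral>\<^sup>+\<omega>. ennreal \<bar>z\<bar> * discount_weight lam (xi nu) sg W (T - t) \<omega> \<partial>M) = ennreal \<bar>z\<bar>"
    using t lam_pos by (simp add: nn_integral_cmult nn_integral_discount_weight)
  also have "(\<integral>\<^sup>+\<omega>. J_integrand ?L 0 t \<omega> \<partial>M) + ennreal \<bar>z\<bar> \<le> ennreal c + ennreal \<bar>z\<bar>"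
    using L0 by (rule add_right_mono)
  also have "\<dots> = ennreal (c + \<bar>z\<bar>)"
    using c by simp
  finally have "(\<integral>\<^sup>+\<omega>. J_integrand f z t \<omega> \<partial>M) \<le> ennreal (c + \<bar>z\<bar>)" .
  then show ?thesis
    unfolding Jop_eq_enn2real using c by (intro enn2real_leI) auto
qed

lemma vseq_abs_bound:
  assumes "K1 \<le> c" and fixed: "\<And>t. t \<in> {0..T} \<Longrightarrow> Jop M W nu r sg lam T K1 zeta (\<lambda>z t. c + \<bar>z\<bar>) 0 t \<le> c"
  shows "t \<in> {0..T} \<Longrightarrow> vseq M W nu r sg lam T K1 zeta n z t \<le> c + \<bar>z\<bar>"
proof (induction n arbitrary: z t)
  case 0
  show ?case using zeta \<open>K1 \<le> c\<close> K1_nonneg by (auto simp: vseq_def max_def abs_if)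
next
  case (Suc n)
  have "0 \<le> c" using \<open>K1 \<le> c\<close> K1_nonneg by simp
  from Jop_abs_bound[OF this fixed Suc.IH Suc.prems] show ?case
    by (simp add: vseq_def)
qed

end

lemma affine_fixed_point_le:
  fixes a U b K :: real
  assumes "0 \<le> a" "a < 1" "0 \<le> K"
  shows "U + a * ((U / (1 - a) + a / (1 - a) * b + K) + b) \<le> U / (1 - a) + a / (1 - a) * b + K"
proof -
  have "1 - a \<noteq> 0" using assms by simp
  then have "U + a * ((U / (1 - a) + a / (1 - a) * b + K) + b) = U / (1 - a) + a / (1 - a) * b + a * K"
    by (simp add: divide_simps) (simp add: algebra_simps)
  also have "\<dots> \<le> U / (1 - a) + a / (1 - a) * b + K"
    using assms by (simp add: mult_left_le_one_le)
  finally show ?thesis .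
qed

theorem corollary4p9:
  fixes M :: "'a measure" and W :: "real \<Rightarrow> 'a \<Rightarrow> real" and nu :: "real measure"
    and r sg lam T K1 zeta U B :: real
  assumes "r > 0" and "sg > 0" and "lam > 0" and "T > 0" and "K1 \<ge> 0"
    and "zeta \<in> {-1, 1}"
    and "standard_BM M W"
    and "prob_space nu" and "sets nu = sets borel" and "emeasure nu {..0} = 0"
    and "integrable nu (\<lambda>y. y)"
    and "U > 0" and "B > 0"
    and hyp: "\<And>f. (\<lambda>(z, t). f z t) \<in> borel_measurable borel
       \<Longrightarrow> (\<forall>z. \<forall>t\<in>{0..T}. 0 \<le> f z t)
       \<Longrightarrow> (\<forall>z z'. \<forall>t\<in>{0..T}. \<bar>f z t - f z' t\<bar> \<le> \<bar>z - z'\<bar>)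
       \<Longrightarrow> bdd_above ((\<lambda>t. f 0 t) ` {0..T})
       \<Longrightarrow> \<forall>t\<in>{0..T}. Jop M W nu r sg lam T K1 zeta f 0 t
             \<le> U + alpha lam nu T * ((SUP t\<in>{0..T}. f 0 t) + B / xi nu)"
  shows "\<forall>n z. \<forall>t\<in>{0..T}.
           vseq M W nu r sg lam T K1 zeta n z t
             \<le> U / (1 - alpha lam nu T)
               + alpha lam nu T / (1 - alpha lam nu T) * (B / xi nu) + K1 + \<bar>z\<bar>"
proof -
  interpret J_operator M W nu r sg lam T K1 zeta
    using assms(1,3-11)
    by (intro J_operator.intro brownian_motion.intro jump_law.intro J_operator_axioms.intro) simp_all
  define a where "a = alpha lam nu T"
  define c where "c = U / (1 - a) + a / (1 - a) * (B / xi nu) + K1"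
  have a: "0 < a" "a < 1"
    using xi_pos \<open>lam > 0\<close> \<open>T > 0\<close> by (simp_all add: a_def alpha_def)
  have "K1 \<le> c"
    using a \<open>U > 0\<close> \<open>B > 0\<close> xi_pos by (simp add: c_def)
  have "Jop M W nu r sg lam T K1 zeta (\<lambda>z t. c + \<bar>z\<bar>) 0 t \<le> c" if "t \<in> {0..T}" for t
  proof -
    have "(\<lambda>(z, t). c + \<bar>z\<bar>) \<in> borel_measurable (borel :: (real \<times> real) measure)"
      unfolding case_prod_beta by (intro borel_measurable_continuous_onI continuous_intros)
    from hyp[OF this] have "Jop M W nu r sg lam T K1 zeta (\<lambda>z t. c + \<bar>z\<bar>) 0 t
        \<le> U + a * ((SUP t\<in>{0..T}. c + \<bar>0\<bar>) + B / xi nu)"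
      using that \<open>K1 \<le> c\<close> \<open>K1 \<ge> 0\<close> unfolding a_def by (force simp: abs_triangle_ineq3 bdd_above_def)
    also have "(SUP t\<in>{0..T}. c + \<bar>0\<bar>) = c"
      using \<open>T > 0\<close> by simp
    also have "U + a * (c + B / xi nu) \<le> c"
      using a \<open>K1 \<ge> 0\<close> unfolding c_def by (intro affine_fixed_point_le) auto
    finally show ?thesis .
  qed
  then show ?thesis
    using vseq_abs_bound[OF \<open>K1 \<le> c\<close>] unfolding c_def a_def by blast
qed

end
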